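(* For every integer $n \ge 1$ there exists a word $w_n$ of length $6n$ over an alphabet of $2n$ letters with $\mathrm{E}(w_n) = 1$ such that $$n - \tfrac{1}{6} < \mathrm{E}_{\mathcal{I}}(w_n) < \infty,$$ where $\mathrm{E}_{\mathcal{I}}$ is taken with $\Sigma$ the $2n$-letter alphabet of $w_n$ and $\Gamma$ any finite alphabet with at least two letters.
   Context: For a nonempty word $v$ and integer $p\ge 0$, $v^{p/|v|}$ denotes the prefix of length $p$ of $vvv\cdots$. For a nonempty finite word $u$, $\mathrm{E}(u) = \sup\{ r \in \mathbb{Q} : u = v^r \text{ for some nonempty word } v\}$. $\mathcal{I}$ is the set of injective morphisms $\Sigma^* \to \Gamma^*$, and for $w\in\Sigma^+$, $\mathrm{E}_{\mathcal{I}}(w) = \sup\{\mathrm{E}(h(w)) : h \in \mathcal{I}\}$. *)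

theory Defs
  imports Main "HOL-Library.Extended_Real"
begin

text \<open>Words are lists; letters are natural numbers (any finite alphabet is
isomorphic to a finite set of naturals).\<close>

definition word_pow_prefix :: "'a list \<Rightarrow> nat \<Rightarrow> 'a list" where
  "word_pow_prefix v p = take p (concat (replicate p v))"

definition is_rat_power :: "'a list \<Rightarrow> 'a list \<Rightarrow> rat \<Rightarrow> bool" where
  "is_rat_power u v r \<longleftrightarrow> v \<noteq> [] \<and> r \<ge> 0 \<and> r * of_nat (length v) = of_nat (length u)
     \<and> u = word_pow_prefix v (length u)"

definition crit_exp :: "'a list \<Rightarrow> real" where
  "crit_exp u = Sup {real_of_rat r | r. \<exists>v. is_rat_power u v r}"

definition morph :: "('a \<Rightarrow> 'b list) \<Rightarrow> 'a list \<Rightarrow> 'b list" where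
  "morph h u = concat (map h u)"

definition inj_morphs :: "'a set \<Rightarrow> 'b set \<Rightarrow> ('a \<Rightarrow> 'b list) set" where
  "inj_morphs Sig Gam = {h. (\<forall>a\<in>Sig. h a \<in> lists Gam) \<and> inj_on (morph h) (lists Sig)}"

text \<open>E_I(w), with Sigma the alphabet of w (the set of its letters) and target alphabet Gamma.\<close>
definition crit_exp_I :: "'b set \<Rightarrow> 'a list \<Rightarrow> ereal" where
  "crit_exp_I Gamma w = (SUP h \<in> inj_morphs (set w) Gamma. ereal (crit_exp (morph h w)))"

end

theory Submission
  imports Defs
begin

(* The witness w_n is the concatenation of the blocks aababb with a = 2k, b = 2k+1, k < n;
   it has no proper period, so E(w_n) = 1.

   Lower bound: under the injective morphism c |-> x^c y x^(2n-c) all blocks have the same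
   image up to padding by x's, so h(w_n) x^(2n) = V^n with |V| = 12n+8, whence
   E(h(w_n)) >= (12n^2+6n)/(12n+8) > n - 1/6.

   Upper bound: every letter c of w_n occurs in a factor c s c t c with cs and ct not
   commuting. Let P be the minimal period of h(w_n) for an injective h. If |h c| >= P, the
   two occurrences of h(c) at distance |h(cs)| force P to divide |h(cs)|, likewise |h(ct)|,
   and factors of a P-periodic word whose lengths are multiples of P commute; so h(cs) and
   h(ct) commute, contradicting injectivity. Hence every |h c| < P, every period of h(w_n)
   is at least |h(w_n)| / |w_n|, and E_I(w_n) <= 6n. *)

definition has_period :: "'a list \<Rightarrow> nat \<Rightarrow> bool" where
  "has_period u p \<longleftrightarrow> (\<forall>i. i + p < length u \<longrightarrow> u ! i = u ! (i + p))"

lemma has_period_nth_mod: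
  assumes "has_period u p" "0 < p" "i < length u"
  shows "u ! i = u ! (i mod p)"
  using assms(3)
proof (induction i rule: less_induct)
  case (less i)
  show ?case
  proof (cases "i < p")
    case False
    then have "u ! (i - p) = u ! ((i - p) mod p)" using less assms(2) by simp
    moreover have "u ! (i - p) = u ! i"
      using assms(1) less.prems False unfolding has_period_def by (metis le_add_diff_inverse2 not_less)
    moreover have "(i - p) mod p = i mod p" using False by (simp add: le_mod_geq)
    ultimately show ?thesis by simp
  qed simp
qed

lemma has_period_nth_cong:
  assumes "has_period u p" "0 < p" "i < length u" "j < length u" "i mod p = j mod p"
  shows "u ! i = u ! j"
  using has_period_nth_mod[OF assms(1,2)] assms(3-5) by metis

lemma exists_minimal_period:
  assumes "0 < p" "has_period u p"
  obtains q where "q \<le> p" "0 < q" "has_period u q" "\<And>r. 0 < r \<Longrightarrow> r < q \<Longrightarrow> \<not> has_period u r"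
proof -
  let ?P = "\<lambda>q. 0 < q \<and> has_period u q"
  have "?P (Least ?P)" "Least ?P \<le> p" using LeastI[of ?P p] Least_le[of ?P p] assms by auto
  moreover have "\<not> has_period u r" if "0 < r" "r < Least ?P" for r
    using not_less_Least[of r ?P] \<open>0 < r\<close> \<open>r < Least ?P\<close> by blast
  ultimately show thesis using that by blast
qed

text \<open>The periodic extension of \<open>u\<close> is invariant under the shift \<open>d\<close>, hence under
  \<open>d mod P\<close>, which is then a period of \<open>u\<close> shorter than \<open>P\<close> unless it vanishes.\<close>
lemma minimal_period_dvd_shift:
  assumes per: "has_period u P" and P_pos: "0 < P"
    and minimal: "\<And>q. 0 < q \<Longrightarrow> q < P \<Longrightarrow> \<not> has_period u q"
    and repeat: "\<And>s. s < P \<Longrightarrow> u ! (a + s) = u ! (a + d + s)"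
    and len: "a + d + P \<le> length u"
  shows "P dvd d"
proof -
  define f where "f x = u ! (x mod P)" for x
  have u_f: "u ! i = f i" if "i < length u" for i
    using has_period_nth_mod[OF per P_pos that] by (simp add: f_def)
  have shift: "f (x + d) = f x" for x
  proof -
    define s where "s = (x + (P - a mod P)) mod P"
    have "s < P" using P_pos by (simp add: s_def)
    have "(a + s) mod P = (a mod P + (x + (P - a mod P))) mod P"
      by (simp add: s_def mod_simps)
    also have "a mod P + (x + (P - a mod P)) = x + P"
      using mod_less_divisor[OF P_pos, of a] by linarith
    finally have as: "(a + s) mod P = x mod P" by simp
    then have ads: "(a + d + s) mod P = (x + d) mod P"
      by (metis add.commute add.left_commute mod_add_right_eq)
    have "f x = u ! (a + s)" using as u_f \<open>s < P\<close> len by (simp add: f_def)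
    also have "\<dots> = u ! (a + d + s)" using repeat \<open>s < P\<close> .
    also have "\<dots> = f (x + d)" using ads u_f \<open>s < P\<close> len by (simp add: f_def)
    finally show ?thesis by simp
  qed
  have "has_period u (d mod P)" unfolding has_period_def
  proof (intro allI impI)
    fix i assume "i + d mod P < length u"
    moreover have "f (i + d mod P) = f (i + d)" by (simp add: f_def mod_simps)
    ultimately show "u ! i = u ! (i + d mod P)" using u_f shift by simp
  qed
  then show ?thesis using minimal[of "d mod P"] P_pos by (auto simp: dvd_eq_mod_eq_0)
qed

text \<open>\<open>Y @ X\<close> is a rotation of \<open>X @ Y\<close> by a multiple of the period.\<close>
lemma has_period_factors_commute:
  assumes per: "has_period u P" and P_pos: "0 < P"
    and u: "u = pre @ X @ Y @ post" and X: "P dvd length X" and Y: "P dvd length Y"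
  shows "X @ Y = Y @ X"
proof (rule nth_equalityI)
  show "length (X @ Y) = length (Y @ X)" by simp
  fix i assume i: "i < length (X @ Y)"
  let ?L = "length (X @ Y)"
  have u_XY: "u ! (length pre + j) = (X @ Y) ! j" if "j < ?L" for j
    using that u nth_append_left[of j "X @ Y" post] by simp
  have "(length X + i) mod ?L mod P = (length X + i) mod P"
    using dvd_add[OF X Y] by (simp add: mod_mod_cancel)
  also have "\<dots> = i mod P" using X by (metis add_0 dvd_imp_mod_0 mod_add_left_eq)
  finally have cong: "(length pre + (length X + i) mod ?L) mod P = (length pre + i) mod P"
    by (metis mod_add_right_eq)
  have mod_lt: "(length X + i) mod ?L < ?L" using i by (intro mod_less_divisor) linarith
  have "(Y @ X) ! i = rotate (length X) (X @ Y) ! i" by (simp add: rotate_append)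
  also have "\<dots> = u ! (length pre + (length X + i) mod ?L)"
    using nth_rotate[OF i, of "length X"] u_XY[OF mod_lt] by simp
  also have "\<dots> = u ! (length pre + i)"
    by (rule has_period_nth_cong[OF per P_pos _ _ cong]) (use i mod_lt in \<open>simp_all add: u\<close>)
  also have "\<dots> = (X @ Y) ! i" using i u_XY by simp
  finally show "(X @ Y) ! i = (Y @ X) ! i" by simp
qed

lemma minimal_period_factors_commute:
  assumes per: "has_period u P" and P_pos: "0 < P"
    and minimal: "\<And>q. 0 < q \<Longrightarrow> q < P \<Longrightarrow> \<not> has_period u q"
    and u: "u = pre @ (Z @ X) @ (Z @ Y) @ Z @ post" and long: "P \<le> length Z"
  shows "(Z @ X) @ (Z @ Y) = (Z @ Y) @ (Z @ X)"
proof -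
  let ?a = "length pre" and ?d = "length (Z @ X)" and ?e = "length (Z @ Y)"
  have "P dvd ?d"
    by (rule minimal_period_dvd_shift[OF per P_pos minimal, of ?a])
      (use long in \<open>auto simp: u nth_append\<close>)
  moreover have "P dvd ?e"
    by (rule minimal_period_dvd_shift[OF per P_pos minimal, of "?a + ?d"])
      (use long in \<open>auto simp: u nth_append\<close>)
  moreover have "u = pre @ (Z @ X) @ (Z @ Y) @ (Z @ post)" using u by simp
  ultimately show ?thesis using has_period_factors_commute[OF per P_pos] by blast
qed

lemma nth_concat_replicate:
  "i < m * length v \<Longrightarrow> concat (replicate m v) ! i = v ! (i mod length v)"
proof (induction m arbitrary: i)
  case (Suc m)
  show ?case
  proof (cases "i < length v")
    case False
    then have "concat (replicate (Suc m) v) ! i = v ! ((i - length v) mod length v)"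
      using Suc by (simp add: nth_append)
    also have "(i - length v) mod length v = i mod length v" using False by (simp add: le_mod_geq)
    finally show ?thesis .
  qed (simp add: nth_append)
qed simp

lemma length_word_pow_prefix: "v \<noteq> [] \<Longrightarrow> length (word_pow_prefix v p) = p"
  by (cases v) (simp_all add: word_pow_prefix_def length_concat sum_list_replicate)

lemma nth_word_pow_prefix:
  assumes "v \<noteq> []" "i < p"
  shows "word_pow_prefix v p ! i = v ! (i mod length v)"
proof -
  have "i < p * length v" using assms by (cases v) auto
  then show ?thesis using assms(2) by (simp add: word_pow_prefix_def nth_concat_replicate)
qed

lemma is_rat_power_has_period: "is_rat_power u v r \<Longrightarrow> has_period u (length v)"
  unfolding is_rat_power_def has_period_def by (metis add_lessD1 mod_add_self2 nth_word_pow_prefix)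

lemma is_rat_power_self: "u \<noteq> [] \<Longrightarrow> is_rat_power u u 1"
  unfolding is_rat_power_def word_pow_prefix_def by (cases "length u") auto

lemma is_rat_power_of_prefix:
  assumes u: "u @ s = concat (replicate m v)" and v: "v \<noteq> []"
  shows "is_rat_power u v (of_nat (length u) / of_nat (length v))"
proof -
  have "u = word_pow_prefix v (length u)"
  proof (rule nth_equalityI)
    fix i assume "i < length u"
    moreover have "length (u @ s) = m * length v"
      using arg_cong[OF u, of length] by (simp add: length_concat sum_list_replicate)
    ultimately have "u ! i = concat (replicate m v) ! i" "i < m * length v"
      by (simp_all flip: u add: nth_append)
    then show "u ! i = word_pow_prefix v (length u) ! i"
      using \<open>i < length u\<close> v by (simp add: nth_concat_replicate nth_word_pow_prefix)
  qed (simp add: length_word_pow_prefix v)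
  then show ?thesis using v by (simp add: is_rat_power_def)
qed

lemma is_rat_power_exponent:
  "is_rat_power u v r \<Longrightarrow> real_of_rat r * real (length v) = real (length u)"
  unfolding is_rat_power_def by (metis of_rat_mult of_rat_of_nat_eq)

lemma is_rat_power_le_crit_exp:
  assumes "is_rat_power u v r"
  shows "real_of_rat r \<le> crit_exp u"
  unfolding crit_exp_def
proof (rule cSup_upper)
  show "bdd_above {real_of_rat r |r. \<exists>v. is_rat_power u v r}"
  proof (rule bdd_aboveI, safe)
    fix r v assume rv: "is_rat_power u v r"
    then have "1 \<le> real (length v)" "0 \<le> real_of_rat r"
      by (auto simp: is_rat_power_def Suc_le_eq)
    then show "real_of_rat r \<le> real (length u)"
      using is_rat_power_exponent[OF rv] by (metis mult_left_mono mult.right_neutral)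
  qed
qed (use assms in blast)

lemma crit_exp_le_if_periods_long:
  assumes "u \<noteq> []" and periods: "\<And>p. 0 < p \<Longrightarrow> has_period u p \<Longrightarrow> real (length u) \<le> m * real p"
  shows "crit_exp u \<le> m"
  unfolding crit_exp_def
proof (rule cSup_least)
  show "{real_of_rat r |r. \<exists>v. is_rat_power u v r} \<noteq> {}"
    using is_rat_power_self[OF assms(1)] by blast
next
  fix x assume "x \<in> {real_of_rat r |r. \<exists>v. is_rat_power u v r}"
  then obtain r v where x: "x = real_of_rat r" and rv: "is_rat_power u v r" by blast
  have v: "0 < length v" using rv by (simp add: is_rat_power_def)
  have "x * real (length v) \<le> m * real (length v)"
    using periods[OF v is_rat_power_has_period[OF rv]] is_rat_power_exponent[OF rv] x by simp
  then show "x \<le> m" using v by simp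
qed

lemma morph_Nil [simp]: "morph h [] = []"
  and morph_Cons [simp]: "morph h (a # u) = h a @ morph h u"
  and morph_append [simp]: "morph h (u @ v) = morph h u @ morph h v"
  by (simp_all add: morph_def)

lemma length_morph: "length (morph h w) = (\<Sum>c\<leftarrow>w. length (h c))"
  by (induction w) auto

lemma inj_morph_nonempty:
  assumes "inj_on (morph h) (lists S)" "c \<in> S"
  shows "h c \<noteq> []"
  using inj_onD[OF assms(1), of "[c]" "[]"] assms(2) by auto

definition returns_noncommuting :: "'a list \<Rightarrow> bool" where
  "returns_noncommuting w \<longleftrightarrow> (\<forall>c \<in> set w. \<exists>pre s t post.
     w = pre @ (c # s) @ (c # t) @ c # post \<and> (c # s) @ (c # t) \<noteq> (c # t) @ (c # s))"

lemma inj_morph_minimal_period_bound: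
  assumes inj: "inj_on (morph h) (lists (set w))"
    and returns: "returns_noncommuting w"
    and per: "has_period (morph h w) P" and P_pos: "0 < P"
    and minimal: "\<And>q. 0 < q \<Longrightarrow> q < P \<Longrightarrow> \<not> has_period (morph h w) q"
  shows "length (morph h w) \<le> length w * P"
proof -
  have short: "length (h c) < P" if c: "c \<in> set w" for c
  proof (rule ccontr)
    assume "\<not> length (h c) < P"
    obtain pre s t post where w: "w = pre @ (c # s) @ (c # t) @ c # post"
      and noncomm: "(c # s) @ (c # t) \<noteq> (c # t) @ (c # s)"
      using returns c unfolding returns_noncommuting_def by blast
    have "morph h w = morph h pre @ (h c @ morph h s) @ (h c @ morph h t) @ h c @ morph h post"
      by (simp add: w)
    from minimal_period_factors_commute[OF per P_pos minimal this] \<open>\<not> length (h c) < P\<close>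
    have "morph h ((c # s) @ (c # t)) = morph h ((c # t) @ (c # s))" by simp
    moreover have "(c # s) @ (c # t) \<in> lists (set w)" "(c # t) @ (c # s) \<in> lists (set w)"
      by (auto simp: w)
    ultimately show False using inj_onD[OF inj] noncomm by blast
  qed
  have "(\<Sum>c\<leftarrow>w. length (h c)) \<le> (\<Sum>c\<leftarrow>w. P)"
    by (rule sum_list_mono) (use short in \<open>simp add: less_imp_le\<close>)
  then show ?thesis by (simp add: length_morph sum_list_triv)
qed

lemma crit_exp_inj_morph_le_length:
  assumes "w \<noteq> []" and inj: "inj_on (morph h) (lists (set w))"
    and returns: "returns_noncommuting w"
  shows "crit_exp (morph h w) \<le> length w"
proof (rule crit_exp_le_if_periods_long)
  obtain c w' where "w = c # w'" using \<open>w \<noteq> []\<close> by (cases w) auto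
  then show "morph h w \<noteq> []" using inj_morph_nonempty[OF inj, of c] by simp
next
  fix p assume "0 < p" "has_period (morph h w) p"
  then obtain P where "P \<le> p" "0 < P" "has_period (morph h w) P"
    and "\<And>q. 0 < q \<Longrightarrow> q < P \<Longrightarrow> \<not> has_period (morph h w) q"
    by (rule exists_minimal_period) blast
  then have "length (morph h w) \<le> length w * P"
    using inj_morph_minimal_period_bound[OF inj returns] by blast
  also have "\<dots> \<le> length w * p" using \<open>P \<le> p\<close> by simp
  finally show "real (length (morph h w)) \<le> real (length w) * real p"
    by (metis of_nat_le_iff of_nat_mult)
qed

definition block :: "nat \<Rightarrow> nat list" where
  "block k = [2*k, 2*k, 2*k+1, 2*k, 2*k+1, 2*k+1]"

definition block_word :: "nat \<Rightarrow> nat list" where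
  "block_word n = concat (map block [0..<n])"

lemma block_word_simps [simp]:
  "block_word 0 = []"
  "block_word (Suc n) = block_word n @ block n"
  by (simp_all add: block_word_def)

lemma length_block_word: "length (block_word n) = 6 * n"
  by (induction n) (simp_all add: block_def)

lemma set_block_word: "set (block_word n) = {0..<2*n}"
  by (induction n) (auto simp: block_def)

lemma block_word_eq_Nil_iff: "block_word n = [] \<longleftrightarrow> n = 0"
  by (simp add: length_block_word flip: length_0_conv)

lemma block_word_split:
  assumes "k < n"
  shows "block_word n = block_word k @ block k @ concat (map block [Suc k..<n])"
proof -
  have "[0..<n] = [0..<k] @ k # [Suc k..<n]"
    using upt_add_eq_append[of 0 k "n - k"] upt_conv_Cons[OF assms] assms by simp
  then show ?thesis by (simp add: block_word_def)
qed

text \<open>Only the first block contains the letters 0 and 1, and the word 001011 is unbordered.\<close>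
lemma block_word_no_proper_period:
  assumes n: "1 \<le> n" and p: "0 < p" "p < 6 * n"
  shows "\<not> has_period (block_word n) p"
proof
  assume per: "has_period (block_word n) p"
  define rest where "rest = concat (map block [1..<n])"
  have w: "block_word n = block 0 @ rest"
    using block_word_split[of 0 n] n by (simp add: rest_def)
  have block_0: "block 0 = [0,0,1,0,1,1]" and length_block_0: "length (block 0) = 6"
    by (simp_all add: block_def)
  have rest_ge: "2 \<le> c" if "c \<in> set rest" for c
    using that by (auto simp: rest_def block_def)
  have per_at: "block_word n ! i = block_word n ! (i + p)" if "i + p < 6 * n" for i
    using per that unfolding has_period_def by (simp add: length_block_word)
  have at_0: "block_word n ! p = 0"
    using per_at[of 0] p by (simp add: w nth_append length_block_0 block_0)
  show False
  proof (cases "p < 6")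
    case True
    have init: "block_word n ! i = block 0 ! i" if "i < 6" for i
      using that by (simp add: w nth_append length_block_0)
    have "block 0 ! p = 0" using at_0 init[OF True] by simp
    moreover have "p < 5 \<Longrightarrow> block 0 ! 1 = block 0 ! (1 + p)"
      using per_at[of 1] init[of 1] init[of "1 + p"] n by simp
    moreover have "p = 1 \<or> p = 2 \<or> p = 3 \<or> p = 4 \<or> p = 5" using p True by linarith
    ultimately show False by (auto simp: block_0)
  next
    case False
    then have "block_word n ! p = rest ! (p - 6)" by (simp add: w nth_append length_block_0)
    moreover have "p - 6 < length rest"
      using p False length_block_word[of n] by (simp add: w length_block_0)
    ultimately show False using at_0 rest_ge[OF nth_mem] by fastforce
  qed
qed

lemma crit_exp_block_word:
  assumes "1 \<le> n"
  shows "crit_exp (block_word n) = 1"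
proof (rule antisym)
  have ne: "block_word n \<noteq> []" using assms by (simp add: block_word_eq_Nil_iff)
  show "crit_exp (block_word n) \<le> 1"
  proof (rule crit_exp_le_if_periods_long[OF ne])
    fix p assume "0 < p" "has_period (block_word n) p"
    then have "\<not> p < 6 * n" using block_word_no_proper_period[OF assms] by blast
    then have "length (block_word n) \<le> p" by (simp add: length_block_word)
    then show "real (length (block_word n)) \<le> 1 * real p" by simp
  qed
  show "1 \<le> crit_exp (block_word n)" using is_rat_power_le_crit_exp[OF is_rat_power_self[OF ne]] by simp
qed

lemma returns_noncommuting_block_word: "returns_noncommuting (block_word n)"
  unfolding returns_noncommuting_def
proof
  fix c assume "c \<in> set (block_word n)"
  then obtain k where k: "k < n" "c \<in> set (block k)" by (auto simp: block_word_def)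
  let ?rest = "concat (map block [Suc k..<n])"
  have w: "block_word n = block_word k @ block k @ ?rest" by (rule block_word_split[OF k(1)])
  from k(2) consider "c = 2*k" | "c = 2*k+1" by (auto simp: block_def)
  then show "\<exists>pre s t post. block_word n = pre @ (c # s) @ (c # t) @ c # post
    \<and> (c # s) @ (c # t) \<noteq> (c # t) @ (c # s)" (is ?split)
  proof cases
    case 1
    show ?split
      by (intro exI[of _ "block_word k"] exI[of _ "[]"] exI[of _ "[2*k+1]"]
          exI[of _ "[2*k+1, 2*k+1] @ ?rest"]) (simp add: w block_def 1)
  next
    case 2
    show ?split
      by (intro exI[of _ "block_word k @ [2*k, 2*k]"] exI[of _ "[2*k]"] exI[of _ "[]"]
          exI[of _ ?rest]) (simp add: w block_def 2)
  qed
qed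

definition marker_code :: "nat \<Rightarrow> 'a \<Rightarrow> 'a \<Rightarrow> nat \<Rightarrow> 'a list" where
  "marker_code M x y c = replicate c x @ y # replicate (M - c) x"

lemma replicate_append_Cons_eq_iff:
  assumes "x \<noteq> y"
  shows "replicate a x @ y # r = replicate b x @ y # r' \<longleftrightarrow> a = b \<and> r = r'"
  using assms
proof (induction a arbitrary: b)
  case 0 then show ?case by (cases b) auto
next
  case (Suc a) then show ?case by (cases b) auto
qed

lemma inj_morph_replicate_Cons:
  assumes "x \<noteq> y"
  shows "inj (morph (\<lambda>c. replicate c x @ y # g c))" (is "inj (morph ?h)")
proof (rule injI)
  show "morph ?h s = morph ?h t \<Longrightarrow> s = t" for s t
  proof (induction s arbitrary: t)
    case Nil then show ?case by (cases t) auto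
  next
    case (Cons a s)
    then obtain b t' where t: "t = b # t'" by (cases t) auto
    with Cons.prems have "a = b" "morph ?h s = morph ?h t'"
      using replicate_append_Cons_eq_iff[OF assms] by auto
    with Cons.IH t show ?case by simp
  qed
qed

lemma marker_code_in_inj_morphs:
  assumes "x \<in> Gamma" "y \<in> Gamma" "x \<noteq> y"
  shows "marker_code M x y \<in> inj_morphs S Gamma"
proof -
  have "inj (morph (marker_code M x y))"
    using inj_morph_replicate_Cons[OF assms(3), of "\<lambda>c. replicate (M - c) x"]
    by (simp add: marker_code_def [abs_def])
  then show ?thesis
    using assms(1,2) by (auto simp: inj_morphs_def marker_code_def intro: inj_on_subset)
qed

text \<open>Up to padding by \<open>x\<close>'s, every block has the same image under \<open>marker_code M x y\<close>.\<close>
definition block_image_core :: "nat \<Rightarrow> 'a \<Rightarrow> 'a \<Rightarrow> 'a list" where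
  "block_image_core M x y = y # replicate M x @ y # replicate (M+1) x @ y # replicate (M-1) x @ y #
     replicate (M+1) x @ y # replicate M x @ [y]"

lemma morph_marker_code_block:
  assumes "2 * k + 1 \<le> M"
  shows "morph (marker_code M x y) (block k)
     = replicate (2*k) x @ block_image_core M x y @ replicate (M - (2*k+1)) x"
proof -
  have merge: "replicate a x @ replicate b x @ r = replicate (a + b) x @ r" for a b r
    by (simp add: replicate_add)
  have lengths: "M - 2*k + 2*k = M" "M - 2*k + (2*k+1) = M+1"
    "M - (2*k+1) + 2*k = M - 1" "M - (2*k+1) + (2*k+1) = M" using assms by simp_all
  show ?thesis
    unfolding block_def block_image_core_def marker_code_def
    by (simp only: morph_Cons morph_Nil append_assoc append_Cons append_Nil merge lengths
        append.right_neutral)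
qed

lemma morph_marker_code_block_word:
  assumes "m \<le> n"
  shows "morph (marker_code (2*n) x y) (block_word m) @ replicate (2*m) x
     = concat (replicate m (block_image_core (2*n) x y @ replicate (2*n+1) x))"
  using assms
proof (induction m)
  case (Suc m)
  let ?h = "marker_code (2*n) x y" and ?V = "block_image_core (2*n) x y @ replicate (2*n+1) x"
  have k: "2*m+1 \<le> 2*n" using Suc.prems by simp
  then have "2*n - (2*m+1) + 2 * Suc m = 2*n+1" by simp
  then have pad: "replicate (2*n - (2*m+1)) x @ replicate (2 * Suc m) x = replicate (2*n+1) x"
    by (simp only: flip: replicate_add)
  have "morph ?h (block_word (Suc m)) @ replicate (2 * Suc m) x
    = morph ?h (block_word m) @ replicate (2*m) x @ block_image_core (2*n) x y
      @ replicate (2*n - (2*m+1)) x @ replicate (2 * Suc m) x"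
    by (simp only: block_word_simps morph_append morph_marker_code_block[OF k] append_assoc)
  also have "\<dots> = (morph ?h (block_word m) @ replicate (2*m) x) @ ?V"
    by (simp only: pad append_assoc)
  also have "\<dots> = concat (replicate m ?V @ [?V])" using Suc by simp
  also have "replicate m ?V @ [?V] = replicate (Suc m) ?V" by (simp add: replicate_append_same)
  finally show ?case .
qed (simp add: block_word_def)

lemma crit_exp_morph_marker_code_block_word:
  assumes n: "1 \<le> n"
  shows "real n - 1/6 < crit_exp (morph (marker_code (2*n) x y) (block_word n))"
proof -
  define u where "u = morph (marker_code (2*n) x y) (block_word n)"
  define V where "V = block_image_core (2*n) x y @ replicate (2*n+1) x"
  have V: "length V = 12*n + 8" using n by (simp add: V_def block_image_core_def)
  have uV: "u @ replicate (2*n) x = concat (replicate n V)"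
    using morph_marker_code_block_word[of n n] by (simp add: u_def V_def)
  have "length u + 2*n = n * length V"
    using arg_cong[OF uV, of length] by (simp add: length_concat sum_list_replicate)
  then have u: "length u = 12*n*n + 6*n" using V by (simp add: algebra_simps)
  have "V \<noteq> []" using V by auto
  from is_rat_power_le_crit_exp[OF is_rat_power_of_prefix[OF uV this]]
  have "real (length u) / real (length V) \<le> crit_exp u" by (simp add: of_rat_divide)
  moreover have "real n - 1/6 < real (length u) / real (length V)"
    using u V by (simp add: field_simps)
  ultimately show ?thesis by (simp add: u_def)
qed

lemma crit_exp_I_block_word_le:
  assumes "1 \<le> n"
  shows "crit_exp_I Gamma (block_word n) \<le> ereal (real (6 * n))"
  unfolding crit_exp_I_def
proof (rule SUP_least)
  fix h assume "h \<in> inj_morphs (set (block_word n)) Gamma"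
  then have "crit_exp (morph h (block_word n)) \<le> real (length (block_word n))"
    using assms returns_noncommuting_block_word
    by (intro crit_exp_inj_morph_le_length) (simp_all add: inj_morphs_def block_word_eq_Nil_iff)
  then show "ereal (crit_exp (morph h (block_word n))) \<le> ereal (real (6 * n))"
    by (simp add: length_block_word)
qed

theorem theorem11:
  fixes n :: nat
  assumes "n \<ge> 1"
  shows "\<exists>w :: nat list. length w = 6 * n \<and> card (set w) = 2 * n \<and> crit_exp w = 1 \<and>
    (\<forall>Gamma :: nat set. finite Gamma \<and> card Gamma \<ge> 2 \<longrightarrow>
       ereal (real n - 1 / 6) < crit_exp_I Gamma w \<and> crit_exp_I Gamma w < \<infinity>)"
proof (intro exI[of _ "block_word n"] conjI allI impI)
  show "length (block_word n) = 6 * n" by (rule length_block_word)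
  show "card (set (block_word n)) = 2 * n" by (simp add: set_block_word)
  show "crit_exp (block_word n) = 1" using assms by (rule crit_exp_block_word)
  fix Gamma :: "nat set"
  assume "finite Gamma \<and> 2 \<le> card Gamma"
  then obtain x y where "x \<in> Gamma" "y \<in> Gamma" "x \<noteq> y"
    using card_le_Suc0_iff_eq[of Gamma] by auto
  then have h: "marker_code (2*n) x y \<in> inj_morphs (set (block_word n)) Gamma"
    by (rule marker_code_in_inj_morphs)
  have "ereal (real n - 1/6) < ereal (crit_exp (morph (marker_code (2*n) x y) (block_word n)))"
    using crit_exp_morph_marker_code_block_word[OF assms] by simp
  also have "\<dots> \<le> crit_exp_I Gamma (block_word n)"
    unfolding crit_exp_I_def by (rule SUP_upper[OF h])
  finally show "ereal (real n - 1 / 6) < crit_exp_I Gamma (block_word n)" .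
  have "crit_exp_I Gamma (block_word n) \<le> ereal (real (6 * n))"
    using assms by (rule crit_exp_I_block_word_le)
  also have "\<dots> < \<infinity>" by simp
  finally show "crit_exp_I Gamma (block_word n) < \<infinity>" .
qed

end
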